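(* Let $\beta=\beta(s)$ be a unit speed semi-real quaternionic curve in $\mathcal{Q}_v$ with non-zero curvatures $\kappa(s)$, $k(s)$ and $(r-\varepsilon_t\varepsilon_T\varepsilon_{N_1}\kappa)(s)$. Then $\beta$ is congruent to a semi-real quaternionic rectifying curve if and only if, for some $c\in\mathbb{R}$, $$\varepsilon_t\varepsilon_{n_1}\varepsilon_{N_1}\frac{\kappa(s)(r-\varepsilon_t\varepsilon_T\varepsilon_{N_1}\kappa)(s)\,(s+c)}{k(s)}+\varepsilon_t\varepsilon_{n_2}\varepsilon_{N_1}\left[\frac{\kappa(s)k(s)+(s+c)[\kappa'(s)k(s)-\kappa(s)k'(s)]}{k^2(s)(r-\varepsilon_t\varepsilon_T\varepsilon_{N_1}\kappa)(s)}\right]'=0.$$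
   Context: $\mathcal{Q}_v$ denotes the semi-real quaternions, identified with the semi-Euclidean space $\mathbb{R}^4_2$ with inner product $h(p,q)=p_1q_1+p_2q_2-p_3q_3-p_4q_4$. A semi-real quaternionic curve $\beta:I\to\mathcal{Q}_v$ is unit speed (pseudo arc length $s$) if $T=\beta'$ satisfies $h(T,T)=\varepsilon_T=\pm1$. Its non-null Serret–Frenet frame $\{T,N_1,N_2,N_3\}$ satisfies $T'=\varepsilon_{N_1}\kappa N_1$, $N_1'=-\varepsilon_t\varepsilon_{N_1}\kappa T+\varepsilon_{n_1}kN_2$, $N_2'=-\varepsilon_t kN_1+\varepsilon_{n_1}(r-\varepsilon_t\varepsilon_T\varepsilon_{N_1}\kappa)N_3$, $N_3'=-\varepsilon_{n_2}(r-\varepsilon_t\varepsilon_T\varepsilon_{N_1}\kappa)N_2$, where $\kappa=\varepsilon_{N_1}\|T'\|$ is the principal curvature of $\beta$; $k$ and $r$ are the principal curvature and torsion of the associated semi-real spatial quaternionic curve $\alpha$ in $\mathbb{R}^3_1$ whose Frenet frame $\{\mathbf{t},\mathbf{n}_1,\mathbf{n}_2\}$ has signs $h(\mathbf{t},\mathbf{t})=\varepsilon_t$, $h(\mathbf{n}_1,\mathbf{n}_1)=\varepsilon_{n_1}$, $h(\mathbf{n}_2,\mathbf{n}_2)=\varepsilon_{n_2}$, related to $\beta$'s frame by $N_1=\varepsilon_T(\mathbf{t}\times T)$, $N_2=\varepsilon_T(\mathbf{n}_1\times T)$, $N_3=\varepsilon_T(\mathbf{n}_2\times T)$ ($\times$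 the semi-real quaternion product); moreover $h(N_1,N_1)=\varepsilon_{N_1}$, $h(N_2,N_2)=\varepsilon_{n_1}\varepsilon_T$, $h(N_3,N_3)=\varepsilon_{n_2}\varepsilon_T$. Thus $k$ is the torsion and $r-\varepsilon_t\varepsilon_T\varepsilon_{N_1}\kappa$ the bitorsion of $\beta$. $\beta$ is a semi-real quaternionic rectifying curve if $\beta(s)=\lambda(s)T(s)+\mu(s)N_2(s)+\nu(s)N_3(s)$ for some differentiable functions $\lambda,\mu,\nu$; congruent means equal up to a rigid motion (here a translation). *)

theory Defs
  imports "HOL-Analysis.Analysis"
begin

text \<open>Semi-real quaternions are identified with the semi-Euclidean space R^4_2,
  modelled as real^4 with the indefinite inner product h of index 2.\<close>

definition sq_h :: "real^4 \<Rightarrow> real^4 \<Rightarrow> real" where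
  "sq_h p q = p$1 * q$1 + p$2 * q$2 - p$3 * q$3 - p$4 * q$4"

definition sq_norm :: "real^4 \<Rightarrow> real" where
  "sq_norm p = sqrt \<bar>sq_h p p\<bar>"

definition sq_rectifying ::
  "real set \<Rightarrow> (real \<Rightarrow> real^4) \<Rightarrow> (real \<Rightarrow> real^4) \<Rightarrow> (real \<Rightarrow> real^4) \<Rightarrow> (real \<Rightarrow> real^4) \<Rightarrow> bool" where
  "sq_rectifying I gamma T N2 N3 \<longleftrightarrow>
     (\<exists>lam mu nu :: real \<Rightarrow> real.
        (\<forall>s\<in>I. lam differentiable (at s) \<and> mu differentiable (at s) \<and> nu differentiable (at s)) \<and>
        (\<forall>s\<in>I. gamma s = lam s *\<^sub>R T s + mu s *\<^sub>R N2 s + nu s *\<^sub>R N3 s))"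

text \<open>Congruent (by a translation, which leaves the Frenet frame unchanged)
  to a rectifying curve.\<close>
definition sq_congruent_rectifying ::
  "real set \<Rightarrow> (real \<Rightarrow> real^4) \<Rightarrow> (real \<Rightarrow> real^4) \<Rightarrow> (real \<Rightarrow> real^4) \<Rightarrow> (real \<Rightarrow> real^4) \<Rightarrow> bool" where
  "sq_congruent_rectifying I beta T N2 N3 \<longleftrightarrow>
     (\<exists>a :: real^4. sq_rectifying I (\<lambda>s. beta s - a) T N2 N3)"

end

theory Submission
  imports Defs
begin

text \<open>Write b for the bitorsion r - et eT eN1 \<kappa>. Differentiating beta - a = \<lambda> T + \<mu> N2 + \<nu> N3
  with the Frenet equations and comparing coefficients in the h-orthogonal, non-degenerate frame
  turns the rectifying condition into the linear system \<lambda>' = 1, eN1 \<kappa> \<lambda> = et k \<mu>,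
  \<mu>' = en2 b \<nu>, \<nu>' = - en1 b \<mu>; conversely, for any solution of this system the difference
  beta - (\<lambda> T + \<mu> N2 + \<nu> N3) has derivative zero and is therefore constant. The first two
  equations force \<lambda> = s + c and \<mu> = et eN1 \<kappa> (s + c) / k, the third then determines \<nu>,
  and the fourth is exactly the stated curvature condition.\<close>

lemma sq_h_commute: "sq_h x y = sq_h y x"
  by (simp add: sq_h_def algebra_simps)

lemma sq_h_add_left: "sq_h (x + y) z = sq_h x z + sq_h y z"
  by (simp add: sq_h_def algebra_simps)

lemma sq_h_scaleR_left: "sq_h (a *\<^sub>R x) z = a * sq_h x z"
  by (simp add: sq_h_def algebra_simps)

lemma sq_h_zero_left: "sq_h 0 z = 0"
  by (simp add: sq_h_def)

lemma sq_h_orthogonal_combination_eq_0: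
  assumes orth: "sq_h A B = 0" "sq_h A C = 0" "sq_h A D = 0"
      "sq_h B C = 0" "sq_h B D = 0" "sq_h C D = 0"
    and nondeg: "sq_h A A \<noteq> 0" "sq_h B B \<noteq> 0" "sq_h C C \<noteq> 0" "sq_h D D \<noteq> 0"
    and comb: "a *\<^sub>R A + b *\<^sub>R B + c *\<^sub>R C + d *\<^sub>R D = 0"
  shows "a = 0 \<and> b = 0 \<and> c = 0 \<and> d = 0"
proof -
  have orth': "sq_h B A = 0" "sq_h C A = 0" "sq_h D A = 0"
      "sq_h C B = 0" "sq_h D B = 0" "sq_h D C = 0"
    using orth by (simp_all add: sq_h_commute)
  have "sq_h (a *\<^sub>R A + b *\<^sub>R B + c *\<^sub>R C + d *\<^sub>R D) X = 0" for X
    by (simp add: comb sq_h_zero_left)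
  from this[of A] this[of B] this[of C] this[of D] show ?thesis
    using nondeg by (simp add: sq_h_add_left sq_h_scaleR_left orth orth')
qed

lemma exists_translate_eq_iff_has_vector_derivative:
  fixes f g :: "real \<Rightarrow> 'a::real_normed_vector"
  assumes I: "open I" "is_interval I"
    and f': "\<forall>s\<in>I. (f has_vector_derivative f' s) (at s)"
  shows "(\<exists>a. \<forall>s\<in>I. f s - a = g s) \<longleftrightarrow> (\<forall>s\<in>I. (g has_vector_derivative f' s) (at s))"
proof
  assume "\<exists>a. \<forall>s\<in>I. f s - a = g s"
  then obtain a where a: "\<forall>s\<in>I. f s - a = g s" by blast
  show "\<forall>s\<in>I. (g has_vector_derivative f' s) (at s)"
  proof
    fix s assume s: "s \<in> I"
    have "((\<lambda>u. f u - a) has_vector_derivative f' s) (at s)"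
      using f' s by (auto intro!: derivative_eq_intros)
    then show "(g has_vector_derivative f' s) (at s)"
      by (rule has_vector_derivative_transform_within_open[OF _ I(1) s]) (use a in auto)
  qed
next
  assume g': "\<forall>s\<in>I. (g has_vector_derivative f' s) (at s)"
  have "\<exists>a. \<forall>s\<in>I. f s - g s = a"
  proof (rule has_derivative_zero_constant)
    show "convex I" using I(2) is_interval_convex_1 by blast
    fix s assume s: "s \<in> I"
    have "((\<lambda>u. f u - g u) has_vector_derivative f' s - f' s) (at s)"
      using f' g' s by (intro has_vector_derivative_diff) auto
    then show "((\<lambda>u. f u - g u) has_derivative (\<lambda>h. 0)) (at s within I)"
      by (auto simp: has_vector_derivative_def intro: has_derivative_at_withinI)
  qed
  then obtain a where "\<forall>s\<in>I. f s - g s = a" by blast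
  then have "\<forall>s\<in>I. f s - a = g s" by auto
  then show "\<exists>a. \<forall>s\<in>I. f s - a = g s" by blast
qed

lemma frenet_combination_has_vector_derivative:
  fixes T N1 N2 N3 :: "real \<Rightarrow> 'a::real_normed_vector"
  assumes T': "(T has_vector_derivative (eN1 * \<kappa>) *\<^sub>R N1 s) (at s)"
    and N2': "(N2 has_vector_derivative (- et * k) *\<^sub>R N1 s + (en1 * b) *\<^sub>R N3 s) (at s)"
    and N3': "(N3 has_vector_derivative (- en2 * b) *\<^sub>R N2 s) (at s)"
    and lam': "(lam has_real_derivative lam') (at s)"
    and mu': "(mu has_real_derivative mu') (at s)"
    and nu': "(nu has_real_derivative nu') (at s)"
  shows "((\<lambda>u. lam u *\<^sub>R T u + mu u *\<^sub>R N2 u + nu u *\<^sub>R N3 u) has_vector_derivative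
      lam' *\<^sub>R T s + (eN1 * \<kappa> * lam s - et * k * mu s) *\<^sub>R N1 s
      + (mu' - en2 * b * nu s) *\<^sub>R N2 s + (nu' + en1 * b * mu s) *\<^sub>R N3 s) (at s)"
proof (rule has_vector_derivative_eq_rhs)
  show "((\<lambda>u. lam u *\<^sub>R T u + mu u *\<^sub>R N2 u + nu u *\<^sub>R N3 u) has_vector_derivative
      lam s *\<^sub>R (eN1 * \<kappa>) *\<^sub>R N1 s + lam' *\<^sub>R T s
      + (mu s *\<^sub>R ((- et * k) *\<^sub>R N1 s + (en1 * b) *\<^sub>R N3 s) + mu' *\<^sub>R N2 s)
      + (nu s *\<^sub>R (- en2 * b) *\<^sub>R N2 s + nu' *\<^sub>R N3 s)) (at s)"
    by (intro has_vector_derivative_add has_vector_derivative_scaleR T' N2' N3' lam' mu' nu')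
qed (simp add: algebra_simps)

lemma frenet_combination_has_vector_derivative_T_iff:
  fixes T N1 N2 N3 :: "real \<Rightarrow> real^4"
  assumes orth: "sq_h (T s) (N1 s) = 0" "sq_h (T s) (N2 s) = 0" "sq_h (T s) (N3 s) = 0"
      "sq_h (N1 s) (N2 s) = 0" "sq_h (N1 s) (N3 s) = 0" "sq_h (N2 s) (N3 s) = 0"
    and nondeg: "sq_h (T s) (T s) \<noteq> 0" "sq_h (N1 s) (N1 s) \<noteq> 0"
      "sq_h (N2 s) (N2 s) \<noteq> 0" "sq_h (N3 s) (N3 s) \<noteq> 0"
    and T': "(T has_vector_derivative (eN1 * \<kappa>) *\<^sub>R N1 s) (at s)"
    and N2': "(N2 has_vector_derivative (- et * k) *\<^sub>R N1 s + (en1 * b) *\<^sub>R N3 s) (at s)"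
    and N3': "(N3 has_vector_derivative (- en2 * b) *\<^sub>R N2 s) (at s)"
    and lam': "(lam has_real_derivative lam') (at s)"
    and mu': "(mu has_real_derivative mu') (at s)"
    and nu': "(nu has_real_derivative nu') (at s)"
  shows "((\<lambda>u. lam u *\<^sub>R T u + mu u *\<^sub>R N2 u + nu u *\<^sub>R N3 u) has_vector_derivative T s) (at s)
    \<longleftrightarrow> lam' = 1 \<and> eN1 * \<kappa> * lam s = et * k * mu s \<and> mu' = en2 * b * nu s \<and> nu' = - en1 * b * mu s"
    (is "?deriv \<longleftrightarrow> ?system")
proof -
  have D: "((\<lambda>u. lam u *\<^sub>R T u + mu u *\<^sub>R N2 u + nu u *\<^sub>R N3 u) has_vector_derivative
      lam' *\<^sub>R T s + (eN1 * \<kappa> * lam s - et * k * mu s) *\<^sub>R N1 s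
      + (mu' - en2 * b * nu s) *\<^sub>R N2 s + (nu' + en1 * b * mu s) *\<^sub>R N3 s) (at s)"
    using T' N2' N3' lam' mu' nu' by (rule frenet_combination_has_vector_derivative)
  show ?thesis
  proof
    assume ?deriv
    with D have "(lam' - 1) *\<^sub>R T s + (eN1 * \<kappa> * lam s - et * k * mu s) *\<^sub>R N1 s
      + (mu' - en2 * b * nu s) *\<^sub>R N2 s + (nu' + en1 * b * mu s) *\<^sub>R N3 s = 0"
      by (auto simp: algebra_simps dest: vector_derivative_unique_at)
    from sq_h_orthogonal_combination_eq_0[OF orth nondeg this] show ?system
      by simp
  next
    assume ?system
    with D show ?deriv
      by simp
  qed
qed

lemma has_real_derivative_times_shift_divide:
  assumes f': "(f has_real_derivative f') (at s)" and g': "(g has_real_derivative g') (at s)"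
    and "g s \<noteq> 0"
  shows "((\<lambda>u. f u * (u + c) / g u) has_real_derivative
    (f s * g s + (s + c) * (f' * g s - f s * g')) / (g s)\<^sup>2) (at s)"
  using assms by (auto intro!: derivative_eq_intros simp: field_simps power2_eq_square)

lemma has_real_derivative_1_imp_shift:
  assumes "is_interval I" "\<forall>s\<in>I. (f has_real_derivative 1) (at s)"
  shows "\<exists>c. \<forall>s\<in>I. f s = s + c"
proof -
  have "\<exists>c. \<forall>s\<in>I. f s - s = c"
  proof (rule has_field_derivative_zero_constant)
    show "convex I" using assms(1) is_interval_convex_1 by blast
    fix s assume "s \<in> I"
    with assms(2) have "((\<lambda>u. f u - u) has_real_derivative 0) (at s)"
      by (auto intro!: derivative_eq_intros)
    then show "((\<lambda>u. f u - u) has_real_derivative 0) (at s within I)"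
      by (rule has_field_derivative_at_within)
  qed
  then show ?thesis
    by (metis add.commute diff_add_cancel)
qed

lemma rectifying_system_imp_curvature_condition:
  fixes lam mu nu \<kappa> k b :: "real \<Rightarrow> real"
  assumes I: "open I" "is_interval I"
    and signs: "eN1 \<in> {-1, 1}" "et \<in> {-1, 1}" "en2 \<in> {-1, 1}"
    and smooth: "\<forall>s\<in>I. \<kappa> differentiable (at s) \<and> k differentiable (at s)"
    and nonzero: "\<forall>s\<in>I. k s \<noteq> 0" "\<forall>s\<in>I. b s \<noteq> 0"
    and diff: "\<forall>s\<in>I. lam differentiable (at s) \<and> mu differentiable (at s) \<and> nu differentiable (at s)"
    and system: "\<forall>s\<in>I. deriv lam s = 1 \<and> eN1 * \<kappa> s * lam s = et * k s * mu s
      \<and> deriv mu s = en2 * b s * nu s \<and> deriv nu s = - en1 * b s * mu s"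
  shows "\<exists>c. \<forall>s\<in>I. et * en1 * eN1 * (\<kappa> s * b s * (s + c)) / k s
     + et * en2 * eN1 * deriv (\<lambda>u. (\<kappa> u * k u + (u + c) * (deriv \<kappa> u * k u - \<kappa> u * deriv k u))
                                   / ((k u)\<^sup>2 * b u)) s = 0"
proof -
  have derivs: "(lam has_real_derivative deriv lam s) (at s)"
      "(nu has_real_derivative deriv nu s) (at s)" "(\<kappa> has_real_derivative deriv \<kappa> s) (at s)"
      "(k has_real_derivative deriv k s) (at s)" if "s \<in> I" for s
    using diff smooth that DERIV_deriv_iff_real_differentiable by blast+
  have "\<forall>s\<in>I. (lam has_real_derivative 1) (at s)"
    using derivs(1) system by auto
  then obtain c where lam: "\<forall>s\<in>I. lam s = s + c"
    using has_real_derivative_1_imp_shift[OF I(2)] by blast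
  define G where "G u = (\<kappa> u * k u + (u + c) * (deriv \<kappa> u * k u - \<kappa> u * deriv k u))
                          / ((k u)\<^sup>2 * b u)" for u
  have mu: "mu s = et * eN1 * (\<kappa> s * (s + c) / k s)" if "s \<in> I" for s
    using system lam nonzero signs that by (auto simp: field_simps)
  have nu: "nu s = en2 * et * eN1 * G s" if s: "s \<in> I" for s
  proof -
    have dmu: "((\<lambda>u. et * eN1 * (\<kappa> u * (u + c) / k u)) has_real_derivative
        et * eN1 * ((\<kappa> s * k s + (s + c) * (deriv \<kappa> s * k s - \<kappa> s * deriv k s)) / (k s)\<^sup>2)) (at s)"
      using nonzero s by (intro DERIV_cmult has_real_derivative_times_shift_divide derivs(3,4)[OF s]) auto
    have "deriv mu s = et * eN1 * ((\<kappa> s * k s + (s + c) * (deriv \<kappa> s * k s - \<kappa> s * deriv k s)) / (k s)\<^sup>2)"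
      by (rule DERIV_imp_deriv[OF has_field_derivative_transform_within_open[OF dmu I(1) s]])
         (use mu in auto)
    with system s have "en2 * b s * nu s = et * eN1 * ((\<kappa> s * k s + (s + c) * (deriv \<kappa> s * k s - \<kappa> s * deriv k s)) / (k s)\<^sup>2)"
      by simp
    with nonzero s signs show ?thesis
      by (auto simp: G_def field_simps)
  qed
  have dG: "deriv G s = en2 * et * eN1 * deriv nu s" if s: "s \<in> I" for s
  proof -
    have dnu: "((\<lambda>u. en2 * et * eN1 * nu u) has_real_derivative en2 * et * eN1 * deriv nu s) (at s)"
      using derivs(2)[OF s] by (rule DERIV_cmult)
    show ?thesis
      by (rule DERIV_imp_deriv[OF has_field_derivative_transform_within_open[OF dnu I(1) s]])
         (use nu signs in auto)
  qed
  have "et * en1 * eN1 * (\<kappa> s * b s * (s + c)) / k s + et * en2 * eN1 * deriv G s = 0"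
    if s: "s \<in> I" for s
  proof -
    have "et * en2 * eN1 * deriv G s = - (et * eN1) * (et * eN1) * (en1 * b s * mu s)"
      using dG[OF s] system s signs by auto
    also have "\<dots> = - et * en1 * eN1 * (\<kappa> s * b s * (s + c)) / k s"
      using mu[OF s] signs by auto
    finally show ?thesis by simp
  qed
  then show ?thesis
    unfolding G_def[abs_def] by blast
qed

lemma curvature_condition_imp_rectifying_system:
  fixes \<kappa> k b :: "real \<Rightarrow> real"
  assumes signs: "eN1 \<in> {-1, 1}" "et \<in> {-1, 1}" "en2 \<in> {-1, 1}"
    and smooth: "\<forall>s\<in>I. \<kappa> differentiable (at s) \<and> k differentiable (at s) \<and> b differentiable (at s)
        \<and> deriv \<kappa> differentiable (at s) \<and> deriv k differentiable (at s)"
    and nonzero: "\<forall>s\<in>I. k s \<noteq> 0" "\<forall>s\<in>I. b s \<noteq> 0"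
    and condition: "\<forall>s\<in>I. et * en1 * eN1 * (\<kappa> s * b s * (s + c)) / k s
     + et * en2 * eN1 * deriv (\<lambda>u. (\<kappa> u * k u + (u + c) * (deriv \<kappa> u * k u - \<kappa> u * deriv k u))
                                   / ((k u)\<^sup>2 * b u)) s = 0"
  shows "\<exists>lam mu nu :: real \<Rightarrow> real.
    (\<forall>s\<in>I. lam differentiable (at s) \<and> mu differentiable (at s) \<and> nu differentiable (at s)) \<and>
    (\<forall>s\<in>I. deriv lam s = 1 \<and> eN1 * \<kappa> s * lam s = et * k s * mu s
      \<and> deriv mu s = en2 * b s * nu s \<and> deriv nu s = - en1 * b s * mu s)"
proof -
  define G where "G u = (\<kappa> u * k u + (u + c) * (deriv \<kappa> u * k u - \<kappa> u * deriv k u))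
                          / ((k u)\<^sup>2 * b u)" for u
  \<comment> \<open>\<mu> solves the N1-equation for \<lambda> = s + c, and \<nu> the N2-equation.\<close>
  define mu where "mu u = et * eN1 * (\<kappa> u * (u + c) / k u)" for u
  define nu where "nu u = en2 * et * eN1 * G u" for u
  have dmu: "(mu has_real_derivative et * eN1 *
      ((\<kappa> s * k s + (s + c) * (deriv \<kappa> s * k s - \<kappa> s * deriv k s)) / (k s)\<^sup>2)) (at s)"
    if s: "s \<in> I" for s
    unfolding mu_def[abs_def] using smooth nonzero s
    by (intro DERIV_cmult has_real_derivative_times_shift_divide)
       (auto simp: DERIV_deriv_iff_real_differentiable)
  have G_differentiable: "G differentiable (at s)" if "s \<in> I" for s
    unfolding G_def[abs_def] using smooth nonzero that by (auto intro!: derivative_intros)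
  have dnu: "(nu has_real_derivative en2 * et * eN1 * deriv G s) (at s)" if "s \<in> I" for s
    unfolding nu_def[abs_def] using G_differentiable[OF that]
    by (intro DERIV_cmult) (simp add: DERIV_deriv_iff_real_differentiable)
  have dlam: "((\<lambda>u. u + c) has_real_derivative 1) (at s)" for s
    by (auto intro!: derivative_eq_intros)
  show ?thesis
  proof (intro exI conjI ballI)
    fix s assume s: "s \<in> I"
    show "(\<lambda>u. u + c) differentiable (at s)" "mu differentiable (at s)" "nu differentiable (at s)"
      using dlam dmu[OF s] dnu[OF s] by (auto simp: real_differentiable_def)
    show "deriv (\<lambda>u. u + c) s = 1"
      using dlam by (rule DERIV_imp_deriv)
    show "eN1 * \<kappa> s * (s + c) = et * k s * mu s"
      using nonzero s signs by (auto simp: mu_def)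
    show "deriv mu s = en2 * b s * nu s"
      using DERIV_imp_deriv[OF dmu[OF s]] nonzero s signs by (auto simp: nu_def G_def)
    have "et * en1 * eN1 * (\<kappa> s * b s * (s + c)) / k s + et * en2 * eN1 * deriv G s = 0"
      using condition s unfolding G_def[abs_def] by blast
    then show "deriv nu s = - en1 * b s * mu s"
      using DERIV_imp_deriv[OF dnu[OF s]] nonzero s by (simp add: mu_def field_simps)
  qed
qed

lemma rectifying_system_solvable_iff:
  fixes \<kappa> k b :: "real \<Rightarrow> real"
  assumes I: "open I" "is_interval I"
    and signs: "eN1 \<in> {-1, 1}" "et \<in> {-1, 1}" "en2 \<in> {-1, 1}"
    and smooth: "\<forall>s\<in>I. \<kappa> differentiable (at s) \<and> k differentiable (at s) \<and> b differentiable (at s)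
        \<and> deriv \<kappa> differentiable (at s) \<and> deriv k differentiable (at s)"
    and nonzero: "\<forall>s\<in>I. k s \<noteq> 0" "\<forall>s\<in>I. b s \<noteq> 0"
  shows "(\<exists>lam mu nu :: real \<Rightarrow> real.
      (\<forall>s\<in>I. lam differentiable (at s) \<and> mu differentiable (at s) \<and> nu differentiable (at s)) \<and>
      (\<forall>s\<in>I. deriv lam s = 1 \<and> eN1 * \<kappa> s * lam s = et * k s * mu s
        \<and> deriv mu s = en2 * b s * nu s \<and> deriv nu s = - en1 * b s * mu s))
    \<longleftrightarrow> (\<exists>c. \<forall>s\<in>I. et * en1 * eN1 * (\<kappa> s * b s * (s + c)) / k s
     + et * en2 * eN1 * deriv (\<lambda>u. (\<kappa> u * k u + (u + c) * (deriv \<kappa> u * k u - \<kappa> u * deriv k u))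
                                   / ((k u)\<^sup>2 * b u)) s = 0)"
proof -
  have "\<forall>s\<in>I. \<kappa> differentiable (at s) \<and> k differentiable (at s)"
    using smooth by blast
  with rectifying_system_imp_curvature_condition[OF I signs]
    curvature_condition_imp_rectifying_system[OF signs smooth nonzero] nonzero
  show ?thesis
    by blast
qed

lemma sq_congruent_rectifying_iff_has_vector_derivative:
  assumes "open I" "is_interval I" "\<forall>s\<in>I. (beta has_vector_derivative T s) (at s)"
  shows "sq_congruent_rectifying I beta T N2 N3 \<longleftrightarrow>
    (\<exists>lam mu nu :: real \<Rightarrow> real.
      (\<forall>s\<in>I. lam differentiable (at s) \<and> mu differentiable (at s) \<and> nu differentiable (at s)) \<and>
      (\<forall>s\<in>I. ((\<lambda>u. lam u *\<^sub>R T u + mu u *\<^sub>R N2 u + nu u *\<^sub>R N3 u) has_vector_derivative T s) (at s)))"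
proof -
  have "(\<exists>a. \<forall>s\<in>I. beta s - a = lam s *\<^sub>R T s + mu s *\<^sub>R N2 s + nu s *\<^sub>R N3 s) \<longleftrightarrow>
    (\<forall>s\<in>I. ((\<lambda>u. lam u *\<^sub>R T u + mu u *\<^sub>R N2 u + nu u *\<^sub>R N3 u) has_vector_derivative T s) (at s))"
    for lam mu nu :: "real \<Rightarrow> real"
    using exists_translate_eq_iff_has_vector_derivative[OF assms,
        where g = "\<lambda>u. lam u *\<^sub>R T u + mu u *\<^sub>R N2 u + nu u *\<^sub>R N3 u"]
    by simp
  then show ?thesis
    unfolding sq_congruent_rectifying_def sq_rectifying_def by blast
qed

theorem theorem4p2:
  fixes I :: "real set"
    and beta T N1 N2 N3 :: "real \<Rightarrow> real^4"
    and \<kappa> k r :: "real \<Rightarrow> real"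
    and eT eN1 et en1 en2 :: real
  assumes I: "open I" "is_interval I" "I \<noteq> {}"
    and signs: "eT \<in> {-1, 1}" "eN1 \<in> {-1, 1}" "et \<in> {-1, 1}" "en1 \<in> {-1, 1}" "en2 \<in> {-1, 1}"
    and unit_speed: "\<forall>s\<in>I. (beta has_vector_derivative T s) (at s)"
      "\<forall>s\<in>I. sq_h (T s) (T s) = eT"
    and frame_norms: "\<forall>s\<in>I. sq_h (N1 s) (N1 s) = eN1"
      "\<forall>s\<in>I. sq_h (N2 s) (N2 s) = en1 * eT"
      "\<forall>s\<in>I. sq_h (N3 s) (N3 s) = en2 * eT"
    and frame_orth: "\<forall>s\<in>I. sq_h (T s) (N1 s) = 0" "\<forall>s\<in>I. sq_h (T s) (N2 s) = 0"
      "\<forall>s\<in>I. sq_h (T s) (N3 s) = 0" "\<forall>s\<in>I. sq_h (N1 s) (N2 s) = 0"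
      "\<forall>s\<in>I. sq_h (N1 s) (N3 s) = 0" "\<forall>s\<in>I. sq_h (N2 s) (N3 s) = 0"
    and frenet_T: "\<forall>s\<in>I. (T has_vector_derivative (eN1 * \<kappa> s) *\<^sub>R N1 s) (at s)"
    and frenet_N1: "\<forall>s\<in>I. (N1 has_vector_derivative
        ((- et * eN1 * \<kappa> s) *\<^sub>R T s + (en1 * k s) *\<^sub>R N2 s)) (at s)"
    and frenet_N2: "\<forall>s\<in>I. (N2 has_vector_derivative
        ((- et * k s) *\<^sub>R N1 s + (en1 * (r s - et * eT * eN1 * \<kappa> s)) *\<^sub>R N3 s)) (at s)"
    and frenet_N3: "\<forall>s\<in>I. (N3 has_vector_derivative
        ((- en2 * (r s - et * eT * eN1 * \<kappa> s)) *\<^sub>R N2 s)) (at s)"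
    and kappa_def: "\<forall>s\<in>I. \<kappa> s = eN1 * sq_norm (vector_derivative T (at s))"
    and smooth: "\<forall>s\<in>I. \<kappa> differentiable (at s) \<and> k differentiable (at s) \<and> r differentiable (at s)
        \<and> deriv \<kappa> differentiable (at s) \<and> deriv k differentiable (at s)"
    and nonzero: "\<forall>s\<in>I. \<kappa> s \<noteq> 0" "\<forall>s\<in>I. k s \<noteq> 0"
      "\<forall>s\<in>I. r s - et * eT * eN1 * \<kappa> s \<noteq> 0"
  shows "sq_congruent_rectifying I beta T N2 N3 \<longleftrightarrow>
    (\<exists>c::real. \<forall>s\<in>I.
       et * en1 * eN1 * (\<kappa> s * (r s - et * eT * eN1 * \<kappa> s) * (s + c)) / k s
     + et * en2 * eN1 * deriv (\<lambda>u. (\<kappa> u * k u + (u + c) * (deriv \<kappa> u * k u - \<kappa> u * deriv k u))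
                                   / ((k u)\<^sup>2 * (r u - et * eT * eN1 * \<kappa> u))) s = 0)"
proof -
  define b where "b u = r u - et * eT * eN1 * \<kappa> u" for u
  have nondeg: "sq_h (T s) (T s) \<noteq> 0" "sq_h (N1 s) (N1 s) \<noteq> 0"
      "sq_h (N2 s) (N2 s) \<noteq> 0" "sq_h (N3 s) (N3 s) \<noteq> 0" if "s \<in> I" for s
    using unit_speed(2) frame_norms signs that by auto
  have frame_iff: "((\<lambda>u. lam u *\<^sub>R T u + mu u *\<^sub>R N2 u + nu u *\<^sub>R N3 u) has_vector_derivative T s) (at s)
      \<longleftrightarrow> deriv lam s = 1 \<and> eN1 * \<kappa> s * lam s = et * k s * mu s
        \<and> deriv mu s = en2 * b s * nu s \<and> deriv nu s = - en1 * b s * mu s"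
    if "s \<in> I" "lam differentiable (at s)" "mu differentiable (at s)" "nu differentiable (at s)"
    for s and lam mu nu :: "real \<Rightarrow> real"
    using frame_orth frenet_T frenet_N2 frenet_N3 nondeg that
    by (intro frenet_combination_has_vector_derivative_T_iff)
       (auto simp: b_def DERIV_deriv_iff_real_differentiable)
  have b_nonzero: "\<forall>s\<in>I. b s \<noteq> 0"
    using nonzero(3) by (simp add: b_def)
  have b_smooth: "\<forall>s\<in>I. \<kappa> differentiable (at s) \<and> k differentiable (at s) \<and> b differentiable (at s)
        \<and> deriv \<kappa> differentiable (at s) \<and> deriv k differentiable (at s)"
    using smooth unfolding b_def[abs_def] by (auto intro!: derivative_intros)
  have "sq_congruent_rectifying I beta T N2 N3 \<longleftrightarrow>
    (\<exists>lam mu nu :: real \<Rightarrow> real.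
      (\<forall>s\<in>I. lam differentiable (at s) \<and> mu differentiable (at s) \<and> nu differentiable (at s)) \<and>
      (\<forall>s\<in>I. deriv lam s = 1 \<and> eN1 * \<kappa> s * lam s = et * k s * mu s
        \<and> deriv mu s = en2 * b s * nu s \<and> deriv nu s = - en1 * b s * mu s))"
    unfolding sq_congruent_rectifying_iff_has_vector_derivative[OF I(1,2) unit_speed(1)]
    by (intro ex_cong1 conj_cong ball_cong refl) (simp add: frame_iff)
  also note rectifying_system_solvable_iff[OF I(1,2) signs(2,3,5) b_smooth nonzero(2) b_nonzero]
  finally show ?thesis
    unfolding b_def .
qed

end
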